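(* Let $\zeta$ be the Riemann zeta function (meromorphically continued) and $\eta(s)=\sum_{n\ge1}(-1)^{n-1}n^{-s}$ the Dirichlet eta function. Define, for large real $x$, $g(x)=\bigl|\ln|\ln\eta(x)|\bigr|$ and $h(x)=\ln|\zeta(\eta(x))|$. Then for every integer $n\ge0$, $$\lim_{x\to\infty}\frac{g^{n}(x)}{x}=\lim_{x\to\infty}\frac{h^{n}(x)}{x}=(\ln2)^n,$$ where $g^{n},h^{n}$ denote $n$-th iterates. *)

theory Defs
  imports "HOL-Complex_Analysis.Complex_Analysis"
begin

definition eta :: "real \<Rightarrow> real" where
  "eta x = (\<Sum>n. (-1) ^ n / real (Suc n) powr x)"

text \<open>Domain {Re s > 0} minus the pole 1; a connected open set containing the
  half-plane Re s > 1, on which the meromorphic continuation of zeta is holomorphic.\<close>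
definition zeta_dom :: "complex set" where
  "zeta_dom = {s. 0 < Re s} - {1}"

text \<open>Riemann zeta function: the value at s of the (unique, by the identity theorem)
  holomorphic continuation to zeta_dom of the Dirichlet series sum n^(-s) (Re s > 1).
  This agrees with the meromorphic continuation of zeta on zeta_dom; outside zeta_dom
  the value is unspecified (not needed for the statement).\<close>
definition zeta :: "complex \<Rightarrow> complex" where
  "zeta s = (THE z. \<exists>f. f holomorphic_on zeta_dom \<and>
      (\<forall>w. 1 < Re w \<longrightarrow> f w = (\<Sum>n. 1 / (of_nat (Suc n)) powr w)) \<and> f s = z)"

definition g_fun :: "real \<Rightarrow> real" where
  "g_fun x = \<bar>ln \<bar>ln (eta x)\<bar>\<bar>"

definition h_fun :: "real \<Rightarrow> real" where
  "h_fun x = ln (cmod (zeta (complex_of_real (eta x))))"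

end

theory Submission
  imports Defs
begin

text \<open>For large \<open>x\<close> the alternating series gives \<open>\<eta>(x) = 1 - 2\<^sup>-\<^sup>x + O(3\<^sup>-\<^sup>x)\<close>, so
  \<open>1 - \<eta>(x)\<close> lies within a bounded factor of \<open>2\<^sup>-\<^sup>x\<close>. Both \<open>1/|ln \<eta>(x)|\<close> and
  \<open>|\<zeta>(\<eta>(x))|\<close> lie between \<open>1/(1 - \<eta>(x)) - 1\<close> and \<open>1/(1 - \<eta>(x))\<close>: the first by
  \<open>ln (1-u) \<approx> -u\<close>, the second because for real \<open>0 < s < 1\<close> the continuation
  \<open>\<zeta>(s) = 1/(s-1) + \<Sum>\<^sub>n (n\<^sup>-\<^sup>s - \<integral>\<^sub>n\<^sup>n\<^sup>+\<^sup>1 t\<^sup>-\<^sup>s dt)\<close> has a correction sum in \<open>[0,1]\<close>.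
  Hence \<open>g(x)\<close> and \<open>h(x)\<close> are both \<open>x ln 2 + O(1)\<close>. Finally, if \<open>f(x)/x \<rightarrow> c > 0\<close> then
  \<open>f \<rightarrow> \<infinity>\<close>, and \<open>f\<^sup>n\<^sup>+\<^sup>1(x)/x = f(f\<^sup>n x)/f\<^sup>n x \<cdot> f\<^sup>n x/x\<close> gives \<open>f\<^sup>n(x)/x \<rightarrow> c\<^sup>n\<close> by induction.\<close>

lemma norm_powr_minus_antiderivative_diff_le:
  fixes s :: complex and m :: real
  assumes m: "0 < m" and s0: "0 \<le> Re s" and s1: "s \<noteq> 1"
  shows "cmod (of_real m powr (-s) - (of_real (m+1) powr (1-s) - of_real m powr (1-s)) / (1-s))
           \<le> cmod s * m powr (-Re s - 1)"
proof -
  define S where "S = closed_segment (complex_of_real m) (of_real (m+1))"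
  have S: "S = of_real ` {m..m+1}"
    unfolding S_def closed_segment_of_real closed_segment_eq_real_ivl by simp
  have "convex S" unfolding S_def by (rule convex_closed_segment)
  have mS: "of_real m \<in> S" and m1S: "of_real (m+1) \<in> S" unfolding S_def by auto
  have not_nonpos: "w \<notin> \<real>\<^sub>\<le>\<^sub>0" if "w \<in> S" for w
    using that m by (auto simp: S complex_nonpos_Reals_iff)
  define K where "K = cmod s * m powr (-Re s - 1)"
  have powr_diff_bound: "cmod (z powr (-s) - of_real m powr (-s)) \<le> K" if z: "z \<in> S" for z
  proof -
    have "cmod (z powr (-s) - of_real m powr (-s)) \<le> K * cmod (z - of_real m)"
    proof (rule field_differentiable_bound[OF \<open>convex S\<close>, where f'="\<lambda>w. -s * w powr (-s-1)"])
      fix w assume w: "w \<in> S"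
      then obtain t where t: "w = of_real t" "m \<le> t" "t \<le> m+1" by (auto simp: S)
      show "((\<lambda>z. z powr (-s)) has_field_derivative (-s * w powr (-s-1))) (at w within S)"
        using has_field_derivative_powr[OF not_nonpos[OF w], of "-s"] has_field_derivative_at_within
        by blast
      have "cmod (w powr (-s-1)) = t powr (- Re s - 1)"
        using t m by (simp add: norm_powr_real_powr)
      also have "\<dots> \<le> m powr (- Re s - 1)"
        using t m s0 by (intro powr_mono2') auto
      finally show "cmod (-s * w powr (-s-1)) \<le> K"
        unfolding K_def by (simp add: norm_mult mult_left_mono)
    qed (use z mS in auto)
    also have "cmod (z - of_real m) \<le> 1"
      using z by (auto simp: S simp flip: of_real_diff)
    then have "K * cmod (z - of_real m) \<le> K"
      unfolding K_def by (simp add: mult_left_le)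
    finally show ?thesis .
  qed
  define \<psi> where "\<psi> = (\<lambda>z. z powr (1-s) / (1-s) - z * of_real m powr (-s))"
  have "cmod (\<psi> (of_real (m+1)) - \<psi> (of_real m)) \<le> K * cmod (of_real (m+1) - of_real m :: complex)"
  proof (rule field_differentiable_bound[OF \<open>convex S\<close>, where f'="\<lambda>z. z powr (-s) - of_real m powr (-s)"])
    fix w assume w: "w \<in> S"
    have "(\<psi> has_field_derivative ((1-s) * w powr (-s) / (1-s) - 1 * of_real m powr (-s))) (at w)"
      unfolding \<psi>_def
      using not_nonpos[OF w] by (auto intro!: derivative_eq_intros)
    then show "(\<psi> has_field_derivative (w powr (-s) - of_real m powr (-s))) (at w within S)"
      using s1 by (simp add: has_field_derivative_at_within)
  qed (use powr_diff_bound mS m1S in auto)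
  moreover have "\<psi> (of_real (m+1)) - \<psi> (of_real m)
      = -(of_real m powr (-s) - (of_real (m+1) powr (1-s) - of_real m powr (1-s)) / (1-s))"
    unfolding \<psi>_def by (simp add: diff_divide_distrib algebra_simps)
  ultimately show ?thesis
    unfolding K_def by (simp only: norm_minus_cancel) simp
qed

definition zeta_corr :: "nat \<Rightarrow> complex \<Rightarrow> complex" where
  "zeta_corr n s = of_nat (Suc n) powr (-s)
     - (of_nat (Suc (Suc n)) powr (1-s) - of_nat (Suc n) powr (1-s)) / (1-s)"

definition zeta_cont :: "complex \<Rightarrow> complex" where
  "zeta_cont s = 1 / (s-1) + (\<Sum>n. zeta_corr n s)"

lemma norm_zeta_corr_le:
  assumes "0 \<le> Re s" "s \<noteq> 1"
  shows "cmod (zeta_corr n s) \<le> cmod s * real (Suc n) powr (-Re s - 1)"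
  using norm_powr_minus_antiderivative_diff_le[of "real (Suc n)" s] assms
  by (simp add: zeta_corr_def add.commute)

lemma summable_real_Suc_powr:
  assumes "p < -1"
  shows "summable (\<lambda>n. real (Suc n) powr p)"
  using summable_Suc_iff[of "\<lambda>n. real n powr p"] summable_real_powr_iff[of p] assms by simp

lemma uniform_limit_zeta_corr:
  assumes "0 < \<sigma>"
  shows "uniform_limit {s. \<sigma> \<le> Re s \<and> cmod s \<le> R \<and> s \<noteq> 1}
           (\<lambda>N s. \<Sum>n<N. zeta_corr n s) (\<lambda>s. \<Sum>n. zeta_corr n s) sequentially"
proof (rule Weierstrass_m_test)
  show "summable (\<lambda>n. R * real (Suc n) powr (-\<sigma> - 1))"
    using assms by (intro summable_mult summable_real_Suc_powr) auto
  fix n s assume "s \<in> {s. \<sigma> \<le> Re s \<and> cmod s \<le> R \<and> s \<noteq> 1}"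
  then have s: "\<sigma> \<le> Re s" "cmod s \<le> R" "s \<noteq> 1" by auto
  have "0 \<le> R" using s(2) norm_ge_zero order_trans by blast
  have "cmod (zeta_corr n s) \<le> cmod s * real (Suc n) powr (-Re s - 1)"
    using s assms by (intro norm_zeta_corr_le) auto
  also have "\<dots> \<le> R * real (Suc n) powr (-\<sigma> - 1)"
    using s \<open>0 \<le> R\<close> by (intro mult_mono powr_mono) auto
  finally show "cmod (zeta_corr n s) \<le> R * real (Suc n) powr (-\<sigma> - 1)" .
qed

lemma open_zeta_dom: "open zeta_dom"
  unfolding zeta_dom_def by (intro open_Diff open_halfspace_Re_gt) auto

lemma connected_zeta_dom: "connected zeta_dom"
  unfolding zeta_dom_def
  by (intro connected_open_delete open_halfspace_Re_gt convex_connected convex_halfspace_Re_gt) auto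

lemma holomorphic_zeta_cont: "zeta_cont holomorphic_on zeta_dom"
proof -
  have "(\<lambda>s. \<Sum>n. zeta_corr n s) holomorphic_on zeta_dom"
  proof (rule holomorphic_uniform_sequence[OF open_zeta_dom])
    show "(\<lambda>s. \<Sum>n<N. zeta_corr n s) holomorphic_on zeta_dom" for N
      unfolding zeta_corr_def zeta_dom_def by (intro holomorphic_intros) auto
    fix x assume "x \<in> zeta_dom"
    then have x: "0 < Re x" "x \<noteq> 1" unfolding zeta_dom_def by auto
    define d where "d = min (Re x / 2) (cmod (x - 1) / 2)"
    have "0 < d" unfolding d_def using x by auto
    have near: "Re x / 2 \<le> Re y \<and> cmod y \<le> cmod x + d \<and> y \<noteq> 1" if "y \<in> cball x d" for y
    proof -
      have "cmod (x - y) \<le> d" using that by (simp add: dist_norm)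
      moreover have "Re x - Re y \<le> cmod (x - y)" using abs_Re_le_cmod[of "x - y"] by simp
      moreover have "cmod y \<le> cmod x + cmod (x - y)" using norm_triangle_ineq3[of x y] by simp
      ultimately show ?thesis using x(2) unfolding d_def by auto
    qed
    then have sub: "cball x d \<subseteq> {s. Re x / 2 \<le> Re s \<and> cmod s \<le> cmod x + d \<and> s \<noteq> 1}"
      by blast
    then have "cball x d \<subseteq> zeta_dom"
      using x by (force simp: zeta_dom_def)
    moreover have "uniform_limit (cball x d) (\<lambda>N s. \<Sum>n<N. zeta_corr n s) (\<lambda>s. \<Sum>n. zeta_corr n s) sequentially"
      using x by (intro uniform_limit_on_subset[OF uniform_limit_zeta_corr sub]) auto
    ultimately show "\<exists>d>0. cball x d \<subseteq> zeta_dom \<and>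
        uniform_limit (cball x d) (\<lambda>N s. \<Sum>n<N. zeta_corr n s) (\<lambda>s. \<Sum>n. zeta_corr n s) sequentially"
      using \<open>0 < d\<close> by blast
  qed
  moreover have "(\<lambda>s. 1 / (s-1)) holomorphic_on zeta_dom"
    unfolding zeta_dom_def by (intro holomorphic_intros) auto
  ultimately show ?thesis
    unfolding zeta_cont_def[abs_def] by (intro holomorphic_on_add)
qed

text \<open>For \<open>Re w > 1\<close> the antiderivative terms telescope to \<open>1/(w-1)\<close>, cancelling the pole term.\<close>
lemma zeta_cont_eq_dirichlet_series:
  assumes w: "1 < Re w"
  shows "zeta_cont w = (\<Sum>n. 1 / of_nat (Suc n) powr w)"
proof -
  define T where "T = (\<lambda>n. of_nat (Suc n) powr (1-w) :: complex)"
  have "summable (\<lambda>n. norm (of_nat (Suc n) powr (-w) :: complex))"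
    using w summable_real_Suc_powr[of "- Re w"] by (simp add: norm_powr_real_powr)
  then have series: "(\<lambda>n. of_nat (Suc n) powr (-w)) sums (\<Sum>n. 1 / of_nat (Suc n) powr w)"
    by (simp add: summable_norm_cancel summable_sums powr_minus_divide)
  have "T \<longlonglongrightarrow> 0" unfolding T_def
    using w by (intro tendsto_neg_powr_complex_of_nat filterlim_Suc) auto
  then have "(\<lambda>n. (T (Suc n) - T n) / (1-w)) sums ((0 - T 0) / (1-w))"
    by (intro sums_divide telescope_sums)
  from sums_diff[OF series this]
  have "(\<lambda>n. zeta_corr n w) sums ((\<Sum>n. 1 / of_nat (Suc n) powr w) + 1 / (1-w))"
    by (simp add: zeta_corr_def T_def)
  then have "(\<Sum>n. zeta_corr n w) = (\<Sum>n. 1 / of_nat (Suc n) powr w) + 1 / (1-w)"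
    by (simp add: sums_iff)
  moreover have "1 / (w-1) + 1 / (1-w) = (0::complex)"
    by (metis minus_diff_eq divide_minus_right add.right_inverse)
  ultimately show ?thesis
    unfolding zeta_cont_def by (simp add: algebra_simps)
qed

lemma zeta_eq_zeta_cont:
  assumes s: "s \<in> zeta_dom"
  shows "zeta s = zeta_cont s"
  unfolding zeta_def
proof (rule the_equality)
  show "\<exists>f. f holomorphic_on zeta_dom \<and> (\<forall>w. 1 < Re w \<longrightarrow> f w = (\<Sum>n. 1 / of_nat (Suc n) powr w))
          \<and> f s = zeta_cont s"
    using holomorphic_zeta_cont zeta_cont_eq_dirichlet_series by blast
next
  fix z assume "\<exists>f. f holomorphic_on zeta_dom \<and> (\<forall>w. 1 < Re w \<longrightarrow> f w = (\<Sum>n. 1 / of_nat (Suc n) powr w))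
                  \<and> f s = z"
  then obtain f where f: "f holomorphic_on zeta_dom" "f s = z"
    and dirichlet: "\<And>w. 1 < Re w \<Longrightarrow> f w = (\<Sum>n. 1 / of_nat (Suc n) powr w)" by blast
  have "f s - zeta_cont s = 0"
  proof (rule analytic_continuation[where f="\<lambda>w. f w - zeta_cont w" and w=s
        and U="{w. 1 < Re w}" and \<xi>=2 and S=zeta_dom])
    show "(\<lambda>w. f w - zeta_cont w) holomorphic_on zeta_dom"
      using f holomorphic_zeta_cont by (intro holomorphic_on_diff)
    have "2 \<in> interior {w. 1 < Re w}" by (simp add: interior_open open_halfspace_Re_gt)
    then show "2 islimpt {w. 1 < Re w}" by (rule interior_limit_point)
  qed (use s open_zeta_dom connected_zeta_dom dirichlet zeta_cont_eq_dirichlet_series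
       in \<open>auto simp: zeta_dom_def\<close>)
  then show "z = zeta_cont s" using f by simp
qed

lemma powr_antiderivative_diff_bounds:
  fixes m s :: real
  assumes m: "0 < m" and s: "0 \<le> s" "s \<noteq> 1"
  shows "(m+1) powr (-s) \<le> ((m+1) powr (1-s) - m powr (1-s)) / (1-s)
         \<and> ((m+1) powr (1-s) - m powr (1-s)) / (1-s) \<le> m powr (-s)"
proof -
  have "DERIV (\<lambda>t. t powr (1-s)) t :> (1-s) * t powr (-s)" if "m \<le> t" for t
    using has_real_derivative_powr[of t "1-s"] that m by simp
  then obtain z where z: "m < z" "z < m+1"
    and mvt: "(m+1) powr (1-s) - m powr (1-s) = (m + 1 - m) * ((1-s) * z powr (-s))"
    using MVT2[of m "m+1" "\<lambda>t. t powr (1-s)" "\<lambda>t. (1-s) * t powr (-s)"] by auto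
  have "((m+1) powr (1-s) - m powr (1-s)) / (1-s) = z powr (-s)"
    using mvt s by simp
  moreover have "(m+1) powr (-s) \<le> z powr (-s)" "z powr (-s) \<le> m powr (-s)"
    using z m s by (auto intro: powr_mono2')
  ultimately show ?thesis by simp
qed

lemma zeta_corr_of_real_sums:
  assumes s: "0 < s" "s < 1"
  obtains F where "0 \<le> F" "F \<le> 1" "(\<lambda>n. zeta_corr n (of_real s)) sums of_real F"
proof -
  define c where "c = (\<lambda>n. real (Suc n) powr (-s)
     - (real (Suc (Suc n)) powr (1-s) - real (Suc n) powr (1-s)) / (1-s))"
  define t where "t = (\<lambda>n. real (Suc n) powr (-s) - real (Suc (Suc n)) powr (-s))"
  have powr_nat: "(of_nat k :: complex) powr (of_real y) = of_real (real k powr y)" for k y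
    by (metis of_real_of_nat_eq powr_of_real of_nat_0_le_iff)
  have corr_real: "zeta_corr n (of_real s) = of_real (c n)" for n
    using powr_nat[of _ "-s"] powr_nat[of _ "1-s"] by (simp add: zeta_corr_def c_def del: of_nat_Suc)
  have c_bounds: "0 \<le> c n" "c n \<le> t n" for n
  proof -
    have "real (Suc (Suc n)) = real (Suc n) + 1" by simp
    with powr_antiderivative_diff_bounds[of "real (Suc n)" s] s
    show "0 \<le> c n" "c n \<le> t n" unfolding c_def t_def by auto
  qed
  have "(\<lambda>n. real (Suc n) powr (-s)) \<longlonglongrightarrow> 0"
    using s by (intro tendsto_neg_powr filterlim_compose[OF filterlim_real_sequentially filterlim_Suc]) auto
  then have "t sums 1"
    unfolding t_def using telescope_sums'[OF \<open>_ \<longlonglongrightarrow> 0\<close>] by simp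
  then have "summable c"
    using summable_comparison_test'[of t 0 c] sums_summable c_bounds by fastforce
  show thesis
  proof
    show "0 \<le> suminf c"
      using \<open>summable c\<close> c_bounds(1) by (rule suminf_nonneg)
    show "suminf c \<le> 1"
      unfolding sums_unique[OF \<open>t sums 1\<close>]
      using c_bounds(2) \<open>summable c\<close> sums_summable[OF \<open>t sums 1\<close>] by (rule suminf_le)
    show "(\<lambda>n. zeta_corr n (of_real s)) sums of_real (suminf c)"
      unfolding corr_real using \<open>summable c\<close> by (intro sums_of_real summable_sums)
  qed
qed

lemma norm_zeta_of_real_bounds:
  assumes s: "0 < s" "s < 1"
  shows "1 / (1-s) - 1 \<le> cmod (zeta (of_real s)) \<and> cmod (zeta (of_real s)) \<le> 1 / (1-s)"
proof -
  obtain F where F: "0 \<le> F" "F \<le> 1" and sums: "(\<lambda>n. zeta_corr n (of_real s)) sums of_real F"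
    using zeta_corr_of_real_sums[OF s] .
  have "zeta (of_real s) = zeta_cont (of_real s)"
    using s by (intro zeta_eq_zeta_cont) (auto simp: zeta_dom_def)
  also have "\<dots> = of_real (1 / (s-1) + F)"
    using sums_unique[OF sums] by (simp add: zeta_cont_def)
  also have "1 / (s-1) = - (1 / (1-s))"
    by (metis minus_diff_eq divide_minus_right)
  finally have "cmod (zeta (of_real s)) = \<bar>F - 1 / (1-s)\<bar>"
    by (simp only: norm_of_real)
  moreover have "1 \<le> 1 / (1-s)" using s by simp
  ultimately show ?thesis using F by auto
qed

lemma eta_bounds:
  assumes x: "0 < x"
  shows "1 - 2 powr (-x) \<le> eta x \<and> eta x \<le> 1 - 2 powr (-x) + 3 powr (-x)"
proof -
  define a where "a = (\<lambda>n. real (Suc n) powr (-x))"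
  have "a \<longlonglongrightarrow> 0" unfolding a_def
    using x by (intro tendsto_neg_powr filterlim_compose[OF filterlim_real_sequentially filterlim_Suc]) auto
  moreover have "0 \<le> a n" "a (Suc n) \<le> a n" for n
    unfolding a_def using x by (auto intro: powr_mono2')
  ultimately have "(\<Sum>i<2. (-1)^i * a i) \<le> (\<Sum>i. (-1)^i * a i)"
    "(\<Sum>i. (-1)^i * a i) \<le> (\<Sum>i<3. (-1)^i * a i)"
    using summable_Leibniz'(2)[of a 1] summable_Leibniz'(4)[of a 1] by simp_all
  moreover have "eta x = (\<Sum>i. (-1)^i * a i)"
    unfolding eta_def a_def by (simp add: powr_minus_divide)
  ultimately show ?thesis
    unfolding a_def by (simp add: numeral_3_eq_3 numeral_2_eq_2)
qed

lemma one_minus_eta_bounds: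
  assumes x: "2 \<le> x"
  shows "5/9 * 2 powr (-x) \<le> 1 - eta x \<and> 1 - eta x \<le> 2 powr (-x)"
proof -
  have "(3/2::real) powr (-x) \<le> (3/2) powr (-2)"
    using x by (intro powr_mono) auto
  also have "\<dots> = 4/9"
    by (simp add: powr_minus power2_eq_square inverse_eq_divide)
  finally have "3 powr (-x) \<le> 4/9 * 2 powr (-x)"
    using powr_mult[of "3/2" 2 "-x"] by (simp add: mult_right_mono)
  then show ?thesis using eta_bounds[of x] x by auto
qed

lemma eta_near_one:
  assumes x: "2 \<le> x"
  shows "3/4 \<le> eta x \<and> eta x < 1"
proof -
  have "(2::real) powr (-x) \<le> 2 powr (-2)"
    using x by (intro powr_mono) auto
  moreover have "(2::real) powr (-2) = 1/4"
    by (simp add: powr_minus)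
  moreover have "0 < (2::real) powr (-x)"
    by simp
  ultimately show ?thesis
    using one_minus_eta_bounds[OF x] by linarith
qed

lemma ln_one_minus_bounds:
  fixes u :: real
  assumes "0 \<le> u" "u < 1"
  shows "u \<le> - ln (1-u) \<and> - ln (1-u) \<le> u / (1-u)"
proof -
  have "ln (1 / (1-u)) \<le> 1 / (1-u) - 1"
    using assms by (intro ln_le_minus_one) auto
  also have "\<dots> = u / (1-u)"
    using assms by (simp add: field_simps)
  finally show ?thesis
    using ln_one_minus_pos_upper_bound[of u] assms by (simp add: ln_div)
qed

lemma ln_linear_bound_of_eta_bounds:
  assumes x: "2 \<le> x" and A: "1 / (1 - eta x) - 1 \<le> A" "A \<le> 1 / (1 - eta x)"
  shows "\<bar>ln A - ln 2 * x\<bar> \<le> 1"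
proof -
  define E where "E = (2::real) powr x"
  define u where "u = 1 - eta x"
  have "(2::real) powr 2 \<le> E"
    unfolding E_def using x by (intro powr_mono) auto
  then have "4 \<le> E" by simp
  have u: "5/9 / E \<le> u" "u \<le> 1 / E"
    using one_minus_eta_bounds[OF x] by (simp_all add: u_def E_def powr_minus_divide)
  have "0 < u"
    using eta_near_one[OF x] by (simp add: u_def)
  have "E \<le> 1 / u" "1 / u \<le> 9/5 * E"
    using u \<open>0 < u\<close> \<open>4 \<le> E\<close> by (simp_all add: field_simps)
  then have A_bounds: "3/4 * E \<le> A" "A \<le> 9/5 * E"
    using A \<open>4 \<le> E\<close> unfolding u_def by linarith+
  have "ln (3/4) + ln E \<le> ln A"
    using A_bounds \<open>4 \<le> E\<close> by (subst ln_mult_pos[symmetric]) (auto intro: ln_mono)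
  moreover have "ln A \<le> ln (9/5) + ln E"
    using A_bounds \<open>4 \<le> E\<close> by (subst ln_mult_pos[symmetric]) (auto intro: ln_mono)
  moreover have "ln E = ln 2 * x"
    unfolding E_def by (simp add: ln_powr)
  moreover have "ln (4/3::real) \<le> 1" "ln (9/5::real) \<le> 1"
    using ln_le_minus_one[of "4/3::real"] ln_le_minus_one[of "9/5::real"] by auto
  moreover have "ln (3/4::real) = - ln (4/3)"
    by (simp add: ln_div)
  ultimately show ?thesis by linarith
qed

lemma g_fun_linear_bound:
  assumes x: "2 \<le> x"
  shows "\<bar>g_fun x - ln 2 * x\<bar> \<le> 1"
proof -
  define u where "u = 1 - eta x"
  define L where "L = - ln (eta x)"
  have u: "0 < u" "u \<le> 1/4"
    using eta_near_one[OF x] by (simp_all add: u_def)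
  then have L: "u \<le> L" "L \<le> u / (1-u)"
    using ln_one_minus_bounds[of u] by (simp_all add: u_def L_def)
  have "u / (1-u) \<le> 1/3"
    using u by (simp add: field_simps)
  then have "L \<le> 1/3"
    using L by linarith
  moreover have "0 < L"
    using L u by linarith
  moreover have "ln (eta x) = - L"
    by (simp add: L_def)
  ultimately have "g_fun x = ln (1 / L)"
    by (simp add: g_fun_def ln_div)
  moreover have "1 / u - 1 \<le> 1 / L" "1 / L \<le> 1 / u"
    using L u by (simp_all add: field_simps)
  ultimately show ?thesis
    using ln_linear_bound_of_eta_bounds[OF x] by (simp add: u_def)
qed

lemma h_fun_linear_bound:
  assumes x: "2 \<le> x"
  shows "\<bar>h_fun x - ln 2 * x\<bar> \<le> 1"
  unfolding h_fun_def
  using eta_near_one[OF x] ln_linear_bound_of_eta_bounds[OF x] norm_zeta_of_real_bounds[of "eta x"] by simp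

lemma tendsto_div_at_top_of_bounded_deviation:
  fixes f :: "real \<Rightarrow> real"
  assumes "eventually (\<lambda>x. \<bar>f x - c * x\<bar> \<le> B) at_top"
  shows "((\<lambda>x. f x / x) \<longlongrightarrow> c) at_top"
proof -
  have "((\<lambda>x. (f x - c * x) / x) \<longlongrightarrow> 0) at_top"
  proof (rule tendsto_0_le[where K=B])
    show "((\<lambda>x. inverse x :: real) \<longlongrightarrow> 0) at_top"
      using tendsto_inverse_0_at_top[OF filterlim_ident] by simp
    show "eventually (\<lambda>x. norm ((f x - c * x) / x) \<le> norm (inverse x) * B) at_top"
      using assms eventually_gt_at_top[of 0]
      by eventually_elim (simp add: abs_divide divide_right_mono field_simps)
  qed
  then have "((\<lambda>x. c + (f x - c * x) / x) \<longlongrightarrow> c + 0) at_top"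
    by (intro tendsto_add tendsto_const)
  moreover have "eventually (\<lambda>x. c + (f x - c * x) / x = f x / x) at_top"
    using eventually_gt_at_top[of 0] by eventually_elim (simp add: field_simps)
  ultimately show ?thesis
    by (simp add: tendsto_cong)
qed

lemma tendsto_funpow_div_at_top:
  fixes f :: "real \<Rightarrow> real"
  assumes f: "((\<lambda>x. f x / x) \<longlongrightarrow> c) at_top" and c: "0 < c"
  shows "((\<lambda>x. (f ^^ n) x / x) \<longlongrightarrow> c ^ n) at_top"
proof (induction n)
  case 0
  have "eventually (\<lambda>x. 1 = (f ^^ 0) x / x) at_top"
    using eventually_gt_at_top[of 0] by eventually_elim simp
  then show ?case by (simp add: tendsto_cong)
next
  case (Suc n)
  define G where "G = f ^^ n"
  have IH: "((\<lambda>x. G x / x) \<longlongrightarrow> c ^ n) at_top"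
    using Suc.IH unfolding G_def .
  have "filterlim (\<lambda>x. G x / x * x) at_top at_top"
    using c by (intro filterlim_tendsto_pos_mult_at_top[OF IH] filterlim_ident) simp
  moreover have "eventually (\<lambda>x. G x / x * x = G x) at_top"
    using eventually_gt_at_top[of 0] by eventually_elim simp
  ultimately have G: "filterlim G at_top at_top"
    by (simp add: filterlim_cong)
  have "((\<lambda>x. f (G x) / G x * (G x / x)) \<longlongrightarrow> c * c ^ n) at_top"
    by (intro tendsto_mult filterlim_compose[OF f G] IH)
  moreover have "eventually (\<lambda>x. f (G x) / G x * (G x / x) = (f ^^ Suc n) x / x) at_top"
    using filterlim_at_top_dense[THEN iffD1, OF G, rule_format, of 0]
    by eventually_elim (simp add: G_def)
  ultimately have "((\<lambda>x. (f ^^ Suc n) x / x) \<longlongrightarrow> c * c ^ n) at_top"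
    by (rule Lim_transform_eventually)
  then show ?case by simp
qed

theorem mainTheorem9:
  fixes n :: nat
  shows "((\<lambda>x. (g_fun ^^ n) x / x) \<longlongrightarrow> (ln 2) ^ n) at_top \<and>
         ((\<lambda>x. (h_fun ^^ n) x / x) \<longlongrightarrow> (ln 2) ^ n) at_top"
proof
  have g: "eventually (\<lambda>x. \<bar>g_fun x - ln 2 * x\<bar> \<le> 1) at_top"
    using eventually_ge_at_top[of "2::real"] by eventually_elim (rule g_fun_linear_bound)
  have h: "eventually (\<lambda>x. \<bar>h_fun x - ln 2 * x\<bar> \<le> 1) at_top"
    using eventually_ge_at_top[of "2::real"] by eventually_elim (rule h_fun_linear_bound)
  have "0 < ln (2::real)" by simp
  then show "((\<lambda>x. (g_fun ^^ n) x / x) \<longlongrightarrow> (ln 2) ^ n) at_top"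
    by (intro tendsto_funpow_div_at_top tendsto_div_at_top_of_bounded_deviation[OF g])
  from \<open>0 < ln 2\<close> show "((\<lambda>x. (h_fun ^^ n) x / x) \<longlongrightarrow> (ln 2) ^ n) at_top"
    by (intro tendsto_funpow_div_at_top tendsto_div_at_top_of_bounded_deviation[OF h])
qed

end
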